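(* Under the setting below, for every $x\in\mathbb R^d$ and every realization of the algorithm, $$\sum_{t\in\mathcal B}\gamma\big(f(x^t)-f(x)\big)+\sum_{t\in\mathcal N}\gamma\big(c-g(x)\big)\le\frac12\|x^0-x\|^2+\frac12\sum_{t=0}^{T-1}\gamma^2\|h^t\|^2+\sum_{t=0}^{T-1}\gamma^2\|h^t\|\,\|e^t\|+\sum_{t=0}^{T-1}\gamma\|h^t\|\,\|\hat e^t\|.$$
   Context: Problem: minimize $f(x)=\frac1n\sum_{i=1}^nf_i(x)$ subject to $g(x)=\frac1n\sum_{i=1}^ng_i(x)\le0$, with $f_i,g_i:\mathbb R^d\to\mathbb R$ convex. Compressors $\mathcal C_0,\mathcal C_1,\dots,\mathcal C_n$ are arbitrary (possibly randomized) maps $\mathbb R^d\to\mathbb R^d$. Safe-EF with bidirectional compression: given $x^0=w^0\in\mathbb R^d$, $\gamma,c>0$, $e_i^0=0$; for $t=0,\dots,T-1$: each worker sets $h_i^t=f_i'(x^t)\in\partial f_i(x^t)$ if $g(x^t)\le c$ and $h_i^t=g_i'(x^t)\in\partial g_i(x^t)$ otherwise; $v_i^t=\mathcal C_i(e_i^t+h_i^t)$; $e_i^{t+1}=e_i^t+h_i^t-v_i^t$; $v^t=\frac1n\sum_iv_i^t$, $w^{t+1}=w^t-\gamma v^t$, $x^{t+1}=x^t+\mathcal C_0(w^{t+1}-x^t)$. Notation: $h^t=\frac1n\sum_ih_i^t$, $e^t=\frac1n\sum_ie_i^t$, $\hat e^t=w^t-x^t$, $\mathcal B=\{t\in\{0,\dots,T-1\}:g(x^t)\le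 c\}$, $\mathcal N=\{0,\dots,T-1\}\setminus\mathcal B$. *)

theory Defs
  imports "HOL-Analysis.Analysis"
begin

definition is_subgrad :: "('a::real_inner \<Rightarrow> real) \<Rightarrow> 'a \<Rightarrow> 'a \<Rightarrow> bool" where
  "is_subgrad \<phi> x s \<longleftrightarrow> (\<forall>y. \<phi> y \<ge> \<phi> x + inner s (y - x))"

definition avg_fun :: "nat \<Rightarrow> (nat \<Rightarrow> 'a \<Rightarrow> real) \<Rightarrow> 'a \<Rightarrow> real" where
  "avg_fun n F = (\<lambda>z. (1 / real n) * (\<Sum>i=1..n. F i z))"

definition avg_vec :: "nat \<Rightarrow> (nat \<Rightarrow> 'a::real_vector) \<Rightarrow> 'a" where
  "avg_vec n u = (1 / real n) *\<^sub>R (\<Sum>i=1..n. u i)"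

end

theory Submission
  imports Defs
begin

(* Error feedback makes the virtual iterate y^t = w^t - \<gamma> e^t follow plain subgradient descent,
   y^(t+1) = y^t - \<gamma> h^t.  Expanding |y^(t+1) - z|^2 yields \<gamma> <h^t, y^t - z> up to a telescoping
   term and \<gamma>^2 |h^t|^2 / 2.  Since x^t = y^t - (w^t - x^t) + \<gamma> e^t, passing to the actual point
   costs at most \<gamma>^2 |h^t| |e^t| + \<gamma> |h^t| |w^t - x^t| by Cauchy-Schwarz.  As an average of
   subgradients is a subgradient of the average, \<gamma> <h^t, x^t - z> dominates \<gamma> (f x^t - f z) when
   g x^t \<le> c, and \<gamma> (g x^t - g z) > \<gamma> (c - g z) otherwise. *)

lemma is_subgrad_le_inner:
  "is_subgrad \<phi> p s \<Longrightarrow> \<phi> p - \<phi> q \<le> inner s (p - q)"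
  unfolding is_subgrad_def by (smt (verit) inner_diff_right)

lemma avg_vec_cong:
  "(\<And>i. i \<in> {1..n} \<Longrightarrow> u i = u' i) \<Longrightarrow> avg_vec n u = avg_vec n u'"
  unfolding avg_vec_def by (metis atLeastAtMost_iff sum.cong)

lemma avg_vec_add [simp]: "avg_vec n (\<lambda>i. u i + u' i) = avg_vec n u + avg_vec n u'"
  unfolding avg_vec_def by (simp add: sum.distrib scaleR_add_right)

lemma avg_vec_diff [simp]: "avg_vec n (\<lambda>i. u i - u' i) = avg_vec n u - avg_vec n u'"
  unfolding avg_vec_def by (simp add: sum_subtractf scaleR_diff_right)

lemma avg_vec_zero [simp]: "avg_vec n (\<lambda>i. 0) = 0"
  unfolding avg_vec_def by simp

lemma error_feedback_virtual_step:
  assumes "\<And>i. i \<in> {1..n} \<Longrightarrow> e' i = e i + h i - v i"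
    and "w' = w - \<gamma> *\<^sub>R avg_vec n v"
  shows "w' - \<gamma> *\<^sub>R avg_vec n e' = w - \<gamma> *\<^sub>R avg_vec n e - \<gamma> *\<^sub>R avg_vec n h"
proof -
  have avg_e': "avg_vec n e' = avg_vec n e + avg_vec n h - avg_vec n v"
    using avg_vec_cong[OF assms(1)] by simp
  show ?thesis
    unfolding assms(2) avg_e' by (simp add: algebra_simps)
qed

lemma is_subgrad_avg:
  assumes "\<And>i. i \<in> {1..n} \<Longrightarrow> is_subgrad (F i) p (s i)"
  shows "is_subgrad (avg_fun n F) p (avg_vec n s)"
  unfolding is_subgrad_def
proof
  fix q
  have "(\<Sum>i=1..n. F i p + inner (s i) (q - p)) \<le> (\<Sum>i=1..n. F i q)"
    using assms unfolding is_subgrad_def by (intro sum_mono) auto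
  then have "(1 / real n) * (\<Sum>i=1..n. F i p + inner (s i) (q - p)) \<le> (1 / real n) * (\<Sum>i=1..n. F i q)"
    by (intro mult_left_mono) auto
  then show "avg_fun n F p + inner (avg_vec n s) (q - p) \<le> avg_fun n F q"
    unfolding avg_fun_def avg_vec_def by (simp add: sum.distrib inner_sum_left distrib_left)
qed

lemma switching_subgrad_le_inner:
  assumes "if g p \<le> c then is_subgrad f p s else is_subgrad g p s"
  shows "(if g p \<le> c then f p - f q else c - g q) \<le> inner s (p - q)"
  using assms is_subgrad_le_inner[of f p s q] is_subgrad_le_inner[of g p s q]
  by (cases "g p \<le> c") auto

lemma perturbed_iterate_step_bound:
  fixes w x z h e :: "'a::real_inner"
  assumes "\<gamma> \<ge> 0"
  shows "\<gamma> * inner h (x - z)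
    \<le> 1/2 * (norm (w - \<gamma> *\<^sub>R e - z))\<^sup>2 - 1/2 * (norm (w - \<gamma> *\<^sub>R e - \<gamma> *\<^sub>R h - z))\<^sup>2
      + 1/2 * (\<gamma>\<^sup>2 * (norm h)\<^sup>2) + \<gamma>\<^sup>2 * norm h * norm e + \<gamma> * norm h * norm (w - x)"
proof -
  define a where "a = w - \<gamma> *\<^sub>R e - z"
  have square_expansion:
    "1/2 * (norm a)\<^sup>2 - 1/2 * (norm (a - \<gamma> *\<^sub>R h))\<^sup>2 + 1/2 * (\<gamma>\<^sup>2 * (norm h)\<^sup>2) = \<gamma> * inner h a"
    unfolding power2_norm_eq_inner
    by (simp add: inner_diff_left inner_diff_right inner_commute power2_eq_square algebra_simps)
  have "inner h (x - z) = inner h a - inner h (w - x) + \<gamma> * inner h e"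
    unfolding a_def by (simp add: inner_diff_right algebra_simps)
  also have "\<dots> \<le> inner h a + norm h * norm (w - x) + \<gamma> * (norm h * norm e)"
    using Cauchy_Schwarz_ineq2[of h "w - x"] norm_cauchy_schwarz[of h e] assms
    by (intro add_mono mult_left_mono) auto
  finally have "\<gamma> * inner h (x - z) \<le> \<gamma> * (inner h a + norm h * norm (w - x) + \<gamma> * (norm h * norm e))"
    using assms by (rule mult_left_mono)
  moreover have "w - \<gamma> *\<^sub>R e - \<gamma> *\<^sub>R h - z = a - \<gamma> *\<^sub>R h"
    unfolding a_def by (simp add: algebra_simps)
  ultimately show ?thesis
    using square_expansion unfolding a_def[symmetric] by (simp add: algebra_simps power2_eq_square)
qed

lemma perturbed_iterate_sum_bound:
  fixes w x e h :: "nat \<Rightarrow> 'a::real_inner"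
  assumes "\<gamma> \<ge> 0"
    and virtual_step: "\<And>t. t < T \<Longrightarrow>
      w (Suc t) - \<gamma> *\<^sub>R e (Suc t) = w t - \<gamma> *\<^sub>R e t - \<gamma> *\<^sub>R h t"
    and \<phi>_bound: "\<And>t. t < T \<Longrightarrow> \<phi> t \<le> \<gamma> * inner (h t) (x t - z)"
  shows "(\<Sum>t<T. \<phi> t) \<le> 1/2 * (norm (w 0 - \<gamma> *\<^sub>R e 0 - z))\<^sup>2
      + 1/2 * (\<Sum>t<T. \<gamma>\<^sup>2 * (norm (h t))\<^sup>2)
      + (\<Sum>t<T. \<gamma>\<^sup>2 * norm (h t) * norm (e t))
      + (\<Sum>t<T. \<gamma> * norm (h t) * norm (w t - x t))"
proof -
  define D where "D t = 1/2 * (norm (w t - \<gamma> *\<^sub>R e t - z))\<^sup>2" for t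
  define R where "R t = 1/2 * (\<gamma>\<^sup>2 * (norm (h t))\<^sup>2) + \<gamma>\<^sup>2 * norm (h t) * norm (e t)
       + \<gamma> * norm (h t) * norm (w t - x t)" for t
  have "\<phi> t \<le> D t - D (Suc t) + R t" if "t < T" for t
    using \<phi>_bound[OF that] perturbed_iterate_step_bound[OF assms(1), of "h t" "x t" z "w t" "e t"]
    unfolding D_def R_def virtual_step[OF that] by linarith
  then have "(\<Sum>t<T. \<phi> t) \<le> (\<Sum>t<T. D t - D (Suc t) + R t)"
    by (intro sum_mono) auto
  also have "\<dots> = D 0 - D T + (\<Sum>t<T. R t)"
    by (simp add: sum.distrib sum_lessThan_telescope')
  also have "\<dots> \<le> D 0 + (\<Sum>t<T. R t)"
    unfolding D_def by simp
  finally show ?thesis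
    unfolding D_def R_def by (simp add: sum.distrib sum_distrib_left)
qed

lemma sum_lessThan_If_split:
  fixes T :: nat
  shows "(\<Sum>t<T. if P t then a t else b t)
     = (\<Sum>t\<in>{t. t < T \<and> P t}. a t) + (\<Sum>t\<in>{t. t < T \<and> \<not> P t}. b t)"
proof -
  have parts: "{..<T} \<inter> {t. P t} = {t. t < T \<and> P t}" "{..<T} \<inter> - {t. P t} = {t. t < T \<and> \<not> P t}"
    by auto
  show ?thesis
    using sum.If_cases[of "{..<T}" P a b] unfolding parts by simp
qed

theorem mainTheorem7:
  fixes n T :: nat and \<gamma> c :: real
    and fi gi :: "nat \<Rightarrow> 'a::euclidean_space \<Rightarrow> real"
    and C :: "nat \<Rightarrow> nat \<Rightarrow> 'a \<Rightarrow> 'a"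
    and x w :: "nat \<Rightarrow> 'a"
    and h e v :: "nat \<Rightarrow> nat \<Rightarrow> 'a"
    and z :: 'a
  assumes n_pos: "n \<ge> 1"
    and gamma_pos: "\<gamma> > 0" and c_pos: "c > 0"
    and conv_f: "\<And>i. i \<in> {1..n} \<Longrightarrow> convex_on UNIV (fi i)"
    and conv_g: "\<And>i. i \<in> {1..n} \<Longrightarrow> convex_on UNIV (gi i)"
    and init: "x 0 = w 0"
    and e_init: "\<And>i. i \<in> {1..n} \<Longrightarrow> e 0 i = 0"
    and h_def: "\<And>t i. t < T \<Longrightarrow> i \<in> {1..n} \<Longrightarrow>
       (if avg_fun n gi (x t) \<le> c then is_subgrad (fi i) (x t) (h t i)
        else is_subgrad (gi i) (x t) (h t i))"
    and v_def: "\<And>t i. t < T \<Longrightarrow> i \<in> {1..n} \<Longrightarrow> v t i = C t i (e t i + h t i)"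
    and e_step: "\<And>t i. t < T \<Longrightarrow> i \<in> {1..n} \<Longrightarrow> e (Suc t) i = e t i + h t i - v t i"
    and w_step: "\<And>t. t < T \<Longrightarrow> w (Suc t) = w t - \<gamma> *\<^sub>R avg_vec n (v t)"
    and x_step: "\<And>t. t < T \<Longrightarrow> x (Suc t) = x t + C t 0 (w (Suc t) - x t)"
  shows "(\<Sum>t\<in>{t. t < T \<and> avg_fun n gi (x t) \<le> c}.
            \<gamma> * (avg_fun n fi (x t) - avg_fun n fi z))
       + (\<Sum>t\<in>{t. t < T \<and> \<not> avg_fun n gi (x t) \<le> c}. \<gamma> * (c - avg_fun n gi z))
       \<le> 1/2 * (norm (x 0 - z))\<^sup>2
         + 1/2 * (\<Sum>t<T. \<gamma>\<^sup>2 * (norm (avg_vec n (h t)))\<^sup>2)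
         + (\<Sum>t<T. \<gamma>\<^sup>2 * norm (avg_vec n (h t)) * norm (avg_vec n (e t)))
         + (\<Sum>t<T. \<gamma> * norm (avg_vec n (h t)) * norm (w t - x t))"
proof -
  let ?f = "avg_fun n fi" and ?g = "avg_fun n gi"
  define H E where "H t = avg_vec n (h t)" and "E t = avg_vec n (e t)" for t
  have "E 0 = avg_vec n (\<lambda>i. 0)"
    unfolding E_def using e_init by (rule avg_vec_cong)
  then have "E 0 = 0"
    by simp
  have virtual_step: "w (Suc t) - \<gamma> *\<^sub>R E (Suc t) = w t - \<gamma> *\<^sub>R E t - \<gamma> *\<^sub>R H t" if "t < T" for t
    unfolding E_def H_def using e_step[OF that] w_step[OF that] by (rule error_feedback_virtual_step)
  define \<phi> where "\<phi> t = \<gamma> * (if ?g (x t) \<le> c then ?f (x t) - ?f z else c - ?g z)" for t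
  have descent: "\<phi> t \<le> \<gamma> * inner (H t) (x t - z)" if "t < T" for t
  proof -
    have "if ?g (x t) \<le> c then is_subgrad ?f (x t) (H t) else is_subgrad ?g (x t) (H t)"
      using h_def[OF that] unfolding H_def
      by (cases "?g (x t) \<le> c") (auto intro!: is_subgrad_avg)
    from mult_left_mono[OF switching_subgrad_le_inner[OF this]] gamma_pos show ?thesis
      unfolding \<phi>_def by simp
  qed
  from perturbed_iterate_sum_bound[where w = w and e = E and h = H,
      OF less_imp_le[OF gamma_pos] virtual_step descent]
  show ?thesis
    using \<open>E 0 = 0\<close> init unfolding \<phi>_def H_def E_def sum_lessThan_If_split[symmetric]
    by (simp add: if_distrib)
qed

end
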